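(* Let $l\in\{1,2,3\}$ and $\lambda_0>0$. Let the base stations be the points of a homogeneous Poisson point process in $\mathbb R^l$ with intensity $\lambda_0$, with a mobile station at the origin, all transmission powers and shadow fading factors equal to $1$. For an increasing path-loss function $h$, let $\left(\frac CI\right)_h=\frac{1/h(R_1)}{\sum_{i\ge2}1/h(R_i)}$, where $R_1\le R_2\le\cdots$ are the ordered distances of the base stations from the origin (received power at distance $R$ is $1/h(R)$). Let $h_i(r)=r^{\varepsilon_i}$, $i=1,2$, with $\varepsilon_1>\varepsilon_2>l$, and write $\left(\frac CI\right)_i=\left(\frac CI\right)_{h_i}$. Then $\left(\frac CI\right)_1\ge_{\mathrm{st}}\left(\frac CI\right)_2$.
   Context: The mobile is served by the BS with strongest received power (the nearest one) and all other BSs interfere. For random variables $X,Y$, $X\ge_{\mathrm{st}}Y$ means $\mathbb P(X>x)\ge\mathbb P(Y>x)$ for all real $x$. *)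

theory Defs
  imports "HOL-Probability.Probability"
begin

definition poisson_prob :: "real \<Rightarrow> nat \<Rightarrow> real" where
  "poisson_prob mu k = exp (- mu) * mu ^ k / fact k"

text \<open>A homogeneous Poisson point process of intensity lam on a Euclidean space,
  realised as a random locally finite (simple) set of points Phi omega.\<close>
definition homogeneous_PPP ::
  "'w measure \<Rightarrow> real \<Rightarrow> ('w \<Rightarrow> 'b::euclidean_space set) \<Rightarrow> bool" where
  "homogeneous_PPP M lam Phi \<longleftrightarrow>
     prob_space M \<and>
     (\<forall>\<omega>\<in>space M. \<forall>A. bounded A \<longrightarrow> finite (Phi \<omega> \<inter> A)) \<and>
     (\<forall>A. A \<in> sets lborel \<and> bounded A \<longrightarrow>
        (\<lambda>\<omega>. card (Phi \<omega> \<inter> A)) \<in> measurable M (count_space UNIV) \<and>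
        (\<forall>k. measure M {\<omega>\<in>space M. card (Phi \<omega> \<inter> A) = k}
               = poisson_prob (lam * measure lborel A) k)) \<and>
     (\<forall>(I::nat set) (A::nat \<Rightarrow> 'b set).
        finite I \<and> (\<forall>i\<in>I. A i \<in> sets lborel \<and> bounded (A i)) \<and> disjoint_family_on A I \<longrightarrow>
        prob_space.indep_vars M (\<lambda>_. count_space UNIV) (\<lambda>i \<omega>. card (Phi \<omega> \<inter> A i)) I)"

text \<open>i-th smallest distance (i \<ge> 1, counted with multiplicity) of the points of P
  from the origin: R_1 \<le> R_2 \<le> ...\<close>
definition ordered_dist :: "'b::euclidean_space set \<Rightarrow> nat \<Rightarrow> real" where
  "ordered_dist P i = Inf {r. 0 \<le> r \<and> i \<le> card {x\<in>P. norm x \<le> r}}"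

text \<open>Carrier-to-interference ratio for path-loss function h: the nearest point
  serves, all others interfere; unit powers and shadowing.\<close>
definition CI_ratio :: "(real \<Rightarrow> real) \<Rightarrow> 'b::euclidean_space set \<Rightarrow> real" where
  "CI_ratio h P = (1 / h (ordered_dist P 1)) / (\<Sum>i. 1 / h (ordered_dist P (i + 2)))"

definition st_ge :: "'w measure \<Rightarrow> ('w \<Rightarrow> real) \<Rightarrow> ('w \<Rightarrow> real) \<Rightarrow> bool" where
  "st_ge M X Y \<longleftrightarrow> (\<forall>x::real. measure M {\<omega>\<in>space M. X \<omega> > x} \<ge> measure M {\<omega>\<in>space M. Y \<omega> > x})"

end

theory Submission
  imports Defs
begin

text \<open>
  Since \<open>R\<^sub>1 \<le> R\<^sub>i\<close>, every ratio \<open>(R\<^sub>1 / R\<^sub>i) powr \<epsilon>\<close> decreases in \<open>\<epsilon>\<close>, so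
  \<open>C/I = 1 / (\<Sum>i. (R\<^sub>1 / R\<^sub>i\<^sub>+\<^sub>2) powr \<epsilon>)\<close> increases in \<open>\<epsilon>\<close> pointwise, provided the
  interference series converges. Almost surely it does: the Poisson process has infinitely many
  points, and by Poisson tail bounds and Borel--Cantelli along the radii \<open>2\<^sup>k\<close> the number of
  points within distance \<open>r\<close> is eventually at most \<open>C r\<^sup>l\<close>. Hence \<open>R\<^sub>i\<^sup>l \<ge> i / C\<close> for
  large \<open>i\<close>, and the series is dominated by \<open>\<Sum> i powr (-\<epsilon>/l)\<close>, finite for \<open>\<epsilon> > l\<close>.
\<close>

abbreviation points_within :: "'b::real_normed_vector set \<Rightarrow> real \<Rightarrow> 'b set" where
  "points_within P r \<equiv> {x\<in>P. norm x \<le> r}"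

lemma points_within_eq_Int_cball: "points_within P r = P \<inter> cball 0 r"
  by (auto simp: dist_norm)

lemma finite_points_within:
  "\<forall>A. bounded A \<longrightarrow> finite (P \<inter> A) \<Longrightarrow> finite (points_within P r)"
  by (simp add: points_within_eq_Int_cball)

lemma card_points_within_mono:
  assumes "\<forall>A. bounded A \<longrightarrow> finite (P \<inter> A)" and "r \<le> r'"
  shows "card (points_within P r) \<le> card (points_within P r')"
  using assms by (intro card_mono finite_points_within) auto

lemma norm_gap_above:
  assumes "\<forall>A. bounded A \<longrightarrow> finite (P \<inter> A)"
  obtains d where "d > 0" "\<And>x. x \<in> P \<Longrightarrow> norm x < m + d \<Longrightarrow> norm x \<le> m"
proof -
  have "finite (norm ` points_within P (m + 1))"
    using finite_points_within[OF assms] by (rule finite_imageI)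
  then obtain \<delta> where \<delta>: "\<delta> > 0" "\<And>t. t \<in> norm ` points_within P (m + 1) \<Longrightarrow> t \<noteq> m \<Longrightarrow> \<delta> \<le> dist m t"
    using finite_set_avoid[of _ m] by meson
  show thesis
  proof
    show "min \<delta> 1 > 0" using \<delta> by simp
  next
    fix x assume x: "x \<in> P" "norm x < m + min \<delta> 1"
    show "norm x \<le> m"
    proof (rule ccontr)
      assume "\<not> norm x \<le> m"
      then have "\<delta> \<le> dist m (norm x)" using x by (intro \<delta>(2)) auto
      then show False using x \<open>\<not> norm x \<le> m\<close> by (simp add: dist_real_def)
    qed
  qed
qed

lemma ordered_dist_le_iff:
  assumes fin: "\<forall>A. bounded A \<longrightarrow> finite (P \<inter> A)"
    and enough: "\<exists>r. 0 \<le> r \<and> i \<le> card (points_within P r)"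
  shows "ordered_dist P i \<le> a \<longleftrightarrow> 0 \<le> a \<and> i \<le> card (points_within P a)"
proof -
  define S where "S = {r. 0 \<le> r \<and> i \<le> card (points_within P r)}"
  have S_ne: "S \<noteq> {}" using enough by (auto simp: S_def)
  have S_bdd: "bdd_below S" by (auto simp: S_def bdd_below_def)
  have S_up: "b \<in> S" if "s \<in> S" "s \<le> b" for s b
    using that card_points_within_mono[OF fin \<open>s \<le> b\<close>] unfolding S_def by simp
  define m where "m = Inf S"
  have "m \<in> S"
  proof -
    obtain d where d: "d > 0" "\<And>x. x \<in> P \<Longrightarrow> norm x < m + d \<Longrightarrow> norm x \<le> m"
      using norm_gap_above[OF fin] by blast
    obtain s where s: "s \<in> S" "s < m + d"
      using cInf_lessD[OF S_ne, of "m + d"] d(1) by (auto simp: m_def)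
    have "points_within P s \<subseteq> points_within P m" using s(2) by (auto intro!: d(2))
    then have "card (points_within P s) \<le> card (points_within P m)"
      by (rule card_mono[OF finite_points_within[OF fin]])
    moreover have "0 \<le> m" unfolding m_def by (rule cInf_greatest[OF S_ne]) (auto simp: S_def)
    ultimately show ?thesis using s(1) by (auto simp: S_def)
  qed
  have "m \<le> a \<longleftrightarrow> a \<in> S"
  proof
    assume "m \<le> a"
    then show "a \<in> S" by (rule S_up[OF \<open>m \<in> S\<close>])
  next
    assume "a \<in> S"
    then show "m \<le> a" unfolding m_def using S_bdd by (rule cInf_lower)
  qed
  moreover have "ordered_dist P i = m" unfolding ordered_dist_def S_def m_def ..
  ultimately show ?thesis unfolding S_def by simp
qed

lemma ordered_dist_nonneg:
  assumes "\<exists>r. 0 \<le> r \<and> i \<le> card (points_within P r)"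
  shows "0 \<le> ordered_dist P i"
  unfolding ordered_dist_def using assms by (intro cInf_greatest) auto

lemma ordered_dist_mono:
  assumes "i \<le> j" and "\<exists>r. 0 \<le> r \<and> j \<le> card (points_within P r)"
  shows "ordered_dist P i \<le> ordered_dist P j"
  unfolding ordered_dist_def using assms
  by (intro cInf_superset_mono) (auto simp: bdd_below_def)

lemma enough_points_iff_nat_radius:
  fixes P :: "'b::real_normed_vector set"
  assumes fin: "\<forall>A. bounded A \<longrightarrow> finite (P \<inter> A)"
  shows "(\<exists>r. 0 \<le> r \<and> i \<le> card (points_within P r)) \<longleftrightarrow> (\<exists>n::nat. i \<le> card (points_within P (real n)))"
proof
  assume "\<exists>r. 0 \<le> r \<and> i \<le> card (points_within P r)"
  then obtain r where "i \<le> card (points_within P r)" by blast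
  moreover obtain n where "r \<le> real n" using real_arch_simple by blast
  ultimately show "\<exists>n::nat. i \<le> card (points_within P (real n))"
    using card_points_within_mono[OF fin] order_trans by blast
qed (metis of_nat_0_le_iff)

lemma least_dyadic_above:
  fixes r :: real
  assumes "2 ^ K \<le> r"
  obtains k where "K \<le> k" "r \<le> 2 ^ k" "2 ^ k \<le> 2 * r"
proof -
  obtain n where "r < 2 ^ n" using real_arch_pow[of 2 r] by auto
  define k where "k = (LEAST k. r \<le> (2::real) ^ k)"
  have up: "r \<le> 2 ^ k" unfolding k_def by (rule LeastI[of _ n]) (use \<open>r < 2 ^ n\<close> in simp)
  have "(2::real) ^ K \<le> 2 ^ k" using assms up by linarith
  then have "K \<le> k" by simp
  moreover have "2 ^ k \<le> 2 * r"
  proof (cases k)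
    case 0
    have "(1::real) \<le> 2 ^ K" by simp
    then have "1 \<le> 2 * r" using assms by linarith
    then show ?thesis using 0 by simp
  next
    case (Suc j)
    then have "\<not> r \<le> 2 ^ j" using not_less_Least[of j "\<lambda>k. r \<le> (2::real) ^ k"] k_def by auto
    then show ?thesis using Suc by simp
  qed
  ultimately show thesis using up that by blast
qed

lemma count_bound_from_dyadic:
  fixes P :: "'b::real_normed_vector set" and C :: real
  assumes fin: "\<forall>A. bounded A \<longrightarrow> finite (P \<inter> A)" and "0 \<le> C"
    and dyadic: "\<And>k. K \<le> k \<Longrightarrow> real (card (points_within P (2 ^ k))) \<le> C * (2 ^ k) ^ d"
    and r: "2 ^ K \<le> r"
  shows "real (card (points_within P r)) \<le> C * (2 * r) ^ d"
proof -
  obtain k where k: "K \<le> k" "r \<le> 2 ^ k" "2 ^ k \<le> 2 * r"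
    using least_dyadic_above[OF r] .
  have "card (points_within P r) \<le> card (points_within P (2 ^ k))"
    using card_points_within_mono[OF fin k(2)] .
  then have "real (card (points_within P r)) \<le> C * (2 ^ k) ^ d"
    using dyadic[OF k(1)] by (meson of_nat_le_iff order_trans)
  also have "\<dots> \<le> C * (2 * r) ^ d"
    by (rule mult_left_mono[OF power_mono]) (use k(3) \<open>0 \<le> C\<close> in auto)
  finally show ?thesis .
qed

lemma ordered_dist_power_ge:
  fixes P :: "'b::euclidean_space set"
  assumes fin: "\<forall>A. bounded A \<longrightarrow> finite (P \<inter> A)"
    and enough: "\<exists>r. 0 \<le> r \<and> i \<le> card (points_within P r)"
    and growth: "\<And>r. r0 \<le> r \<Longrightarrow> real (card (points_within P r)) \<le> C * r ^ d"
    and "0 \<le> r0" and beyond: "card (points_within P r0) < i"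
  shows "r0 < ordered_dist P i" "real i \<le> C * ordered_dist P i ^ d"
proof -
  have R: "0 \<le> ordered_dist P i" "i \<le> card (points_within P (ordered_dist P i))"
    using ordered_dist_le_iff[OF fin enough, of "ordered_dist P i"] by simp_all
  show far: "r0 < ordered_dist P i"
  proof (rule ccontr)
    assume "\<not> r0 < ordered_dist P i"
    then have "card (points_within P (ordered_dist P i)) \<le> card (points_within P r0)"
      by (intro card_points_within_mono[OF fin]) simp
    then show False using R(2) beyond by simp
  qed
  have "real i \<le> real (card (points_within P (ordered_dist P i)))" using R(2) by simp
  also have "\<dots> \<le> C * ordered_dist P i ^ d" using far by (intro growth) simp
  finally show "real i \<le> C * ordered_dist P i ^ d" .
qed

lemma summable_nearest_to_rest_powr:
  fixes P :: "'b::euclidean_space set" and C e r0 :: real and d :: nat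
  assumes fin: "\<forall>A. bounded A \<longrightarrow> finite (P \<inter> A)"
    and enough: "\<forall>i. \<exists>r. 0 \<le> r \<and> i \<le> card (points_within P r)"
    and growth: "\<And>r. r0 \<le> r \<Longrightarrow> real (card (points_within P r)) \<le> C * r ^ d"
    and "0 \<le> r0" "0 < C" "0 < d" "real d < e"
  shows "summable (\<lambda>i. (ordered_dist P 1 / ordered_dist P (i + 2)) powr e)"
proof -
  define R where "R = ordered_dist P"
  define B where "B = R 1 powr e * C powr (e / d)"
  have R1: "0 \<le> R 1" unfolding R_def using enough by (intro ordered_dist_nonneg) blast
  have term_le: "(R 1 / R (i + 2)) powr e \<le> B * real (i + 2) powr (- (e / d))"
    if "card (points_within P r0) < i + 2" for i
  proof -
    let ?n = "real (i + 2)"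
    have far: "r0 < R (i + 2)" and lower: "?n \<le> C * R (i + 2) ^ d"
      using ordered_dist_power_ge[OF fin _ growth \<open>0 \<le> r0\<close> that] enough
      unfolding R_def by blast+
    have R_pos: "0 < R (i + 2)" using far \<open>0 \<le> r0\<close> by linarith
    have "(?n / C) powr (e / d) \<le> (R (i + 2) ^ d) powr (e / d)"
      using lower \<open>0 < C\<close> \<open>0 < d\<close> \<open>real d < e\<close>
      by (intro powr_mono2) (auto simp: field_simps)
    also have "\<dots> = R (i + 2) powr e"
      using R_pos \<open>0 < d\<close> by (simp add: powr_realpow[symmetric] powr_powr)
    finally have denom: "(?n / C) powr (e / d) \<le> R (i + 2) powr e" .
    have "(R 1 / R (i + 2)) powr e = R 1 powr e / R (i + 2) powr e"
      using R1 R_pos by (simp add: powr_divide)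
    also have "\<dots> \<le> R 1 powr e / (?n / C) powr (e / d)"
      using denom \<open>0 < C\<close> by (intro divide_left_mono mult_pos_pos) auto
    also have "\<dots> = B * ?n powr (- (e / d))"
      using \<open>0 < C\<close> by (simp add: B_def powr_divide powr_minus_divide)
    finally show ?thesis .
  qed
  have "1 < e / real d" using \<open>0 < d\<close> \<open>real d < e\<close> by (simp add: less_divide_eq)
  then have "summable (\<lambda>n. real n powr (- (e / d)))"
    by (subst summable_real_powr_iff) simp
  then have "summable (\<lambda>i. B * real (i + 2) powr (- (e / d)))"
    by (subst summable_iff_shift[where k = 2]) (rule summable_mult)
  then show ?thesis unfolding R_def[symmetric]
  proof (rule summable_comparison_test')
    show "norm ((R 1 / R (i + 2)) powr e) \<le> B * real (i + 2) powr (- (e / d))"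
      if "card (points_within P r0) \<le> i" for i
      using term_le[of i] that by simp
  qed
qed

lemma nearest_to_rest_ratio_powr_mono:
  fixes R :: "nat \<Rightarrow> real" and e1 e2 :: real
  assumes R1: "0 \<le> R 1" and R_ge: "\<And>i. R 1 \<le> R (i + 2)" and e: "0 < e2" "e2 \<le> e1"
    and summable: "summable (\<lambda>i. (R 1 / R (i + 2)) powr e2)"
  shows "(1 / R 1 powr e2) / (\<Sum>i. 1 / R (i + 2) powr e2)
       \<le> (1 / R 1 powr e1) / (\<Sum>i. 1 / R (i + 2) powr e1)"
  \<comment> \<open>Summability is essential: \<open>suminf\<close> of a divergent series is an unspecified value.\<close>
proof (cases "R 1 = 0")
  case False
  then have R1_pos: "0 < R 1" using R1 by simp
  define T where "T = (\<lambda>e i. (R 1 / R (i + 2)) powr e)"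
  have R_pos: "0 < R (i + 2)" for i using R1_pos R_ge[of i] by linarith
  have T_le: "T e1 i \<le> T e2 i" for i
    unfolding T_def using R_pos[of i] R_ge[of i] R1_pos e by (intro powr_mono') auto
  have T2: "summable (T e2)" using summable by (simp add: T_def)
  have "norm (T e1 i) \<le> T e2 i" for i using T_le[of i] by (simp add: T_def)
  then have T1: "summable (T e1)" by (rule summable_comparison_test'[OF T2])
  have ratio_eq: "(1 / R 1 powr e) / (\<Sum>i. 1 / R (i + 2) powr e) = 1 / suminf (T e)"
    if "summable (T e)" for e
  proof -
    have "1 / R (i + 2) powr e = T e i / R 1 powr e" for i
      using R_pos R1_pos by (simp add: T_def powr_divide)
    then have "(\<Sum>i. 1 / R (i + 2) powr e) = suminf (T e) / R 1 powr e"
      using suminf_divide[OF that] by simp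
    then show ?thesis using R1_pos by simp
  qed
  have "0 < T e1 0" using R1_pos R_pos[of 0] by (simp add: T_def)
  then have pos: "0 < suminf (T e1)" using T1 by (intro suminf_pos2) (auto simp: T_def)
  have le: "suminf (T e1) \<le> suminf (T e2)" using T_le T1 T2 by (rule suminf_le)
  have "1 / suminf (T e2) \<le> 1 / suminf (T e1)"
    by (rule divide_left_mono[OF le]) (use pos le in \<open>auto intro!: mult_pos_pos\<close>)
  then show ?thesis unfolding ratio_eq[OF T1] ratio_eq[OF T2] .
next
  case True
  then show ?thesis by simp
qed

lemma CI_ratio_powr_mono:
  fixes P :: "'b::euclidean_space set" and C r0 e1 e2 :: real
  assumes fin: "\<forall>A. bounded A \<longrightarrow> finite (P \<inter> A)"
    and enough: "\<forall>i. \<exists>r. 0 \<le> r \<and> i \<le> card (points_within P r)"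
    and growth: "\<And>r. r0 \<le> r \<Longrightarrow> real (card (points_within P r)) \<le> C * r ^ DIM('b)"
    and "0 \<le> r0" "0 < C" and e: "real DIM('b) < e2" "e2 \<le> e1"
  shows "CI_ratio (\<lambda>r. r powr e2) P \<le> CI_ratio (\<lambda>r. r powr e1) P"
proof -
  have "0 < e2" using e(1) DIM_positive[where 'a = 'b] by linarith
  moreover have "summable (\<lambda>i. (ordered_dist P 1 / ordered_dist P (i + 2)) powr e2)"
    using summable_nearest_to_rest_powr[OF fin enough growth \<open>0 \<le> r0\<close> \<open>0 < C\<close> DIM_positive e(1)] .
  ultimately show ?thesis
    unfolding CI_ratio_def using enough e(2)
    by (intro nearest_to_rest_ratio_powr_mono[of "ordered_dist P"] ordered_dist_nonneg ordered_dist_mono)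
      auto
qed

lemma power_over_fact_le_exp:
  fixes x :: real
  assumes "0 \<le> x"
  shows "x ^ n / fact n \<le> exp x"
proof -
  have "(\<lambda>k. x ^ k / fact k) sums exp x" using exp_converges[of x] by (simp add: divide_inverse_commute)
  then have "(\<Sum>k\<in>{n}. x ^ k / fact k) \<le> exp x"
    using assms by (intro sums_le[OF _ sums_If_finite_set]) auto
  then show ?thesis by simp
qed

lemma poisson_prob_le:
  assumes "0 < mu"
  shows "poisson_prob mu k \<le> (real k + 1) / mu"
proof -
  have "poisson_prob mu k = mu ^ k / fact k / exp mu"
    by (simp add: poisson_prob_def exp_minus field_simps)
  also have "\<dots> \<le> mu ^ k / fact k / (mu ^ Suc k / fact (Suc k))"
    using power_over_fact_le_exp[of mu "Suc k"] assms by (intro divide_left_mono) auto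
  also have "\<dots> = (real k + 1) / mu" using assms by (simp add: field_simps)
  finally show ?thesis .
qed

lemma poisson_upper_tail_le:
  assumes "0 < mu"
  shows "1 - (\<Sum>k<m. poisson_prob mu k) \<le> mu ^ m / fact m"
proof -
  obtain t where t: "\<bar>t\<bar> \<le> \<bar>mu\<bar>" "exp mu = (\<Sum>k<m. mu ^ k / fact k) + exp t / fact m * mu ^ m"
    using Maclaurin_exp_le[of mu m] by blast
  have "1 - (\<Sum>k<m. poisson_prob mu k) = exp (- mu) * (exp mu - (\<Sum>k<m. mu ^ k / fact k))"
    by (simp add: poisson_prob_def sum_distrib_left algebra_simps exp_minus_inverse)
  also have "\<dots> = exp (- mu) * (exp t / fact m * mu ^ m)" using t(2) by simp
  also have "\<dots> = exp (t - mu) * (mu ^ m / fact m)" by (simp add: exp_diff exp_minus field_simps)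
  also have "\<dots> \<le> 1 * (mu ^ m / fact m)"
    using t(1) assms by (intro mult_right_mono) auto
  finally show ?thesis by simp
qed

lemma poisson_upper_tail_le_half_power:
  assumes "0 < mu" and m: "2 * exp 1 * mu \<le> real m"
  shows "1 - (\<Sum>k<m. poisson_prob mu k) \<le> (1 / 2) ^ m"
proof -
  have m_pos: "0 < real m" using assms by (smt (verit) exp_gt_zero mult_pos_pos)
  have "mu ^ m / fact m = (mu / real m) ^ m * (real m ^ m / fact m)"
    using m_pos by (simp add: power_divide)
  also have "\<dots> \<le> (mu / real m) ^ m * exp 1 ^ m"
    using power_over_fact_le_exp[of "real m" m] assms m_pos
    by (intro mult_left_mono) (auto simp: exp_of_nat_mult[symmetric])
  also have "\<dots> = (exp 1 * mu / real m) ^ m" by (simp add: power_mult_distrib[symmetric] mult_ac)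
  also have "\<dots> \<le> (1 / 2) ^ m"
    using assms m_pos by (intro power_mono) (simp_all add: field_simps)
  finally show ?thesis using poisson_upper_tail_le[OF assms(1), of m] by linarith
qed

lemma measure_cball_eq:
  assumes "0 \<le> r"
  shows "measure lborel (cball (0::'b::euclidean_space) r) = r ^ DIM('b) * measure lborel (ball (0::'b) 1)"
  unfolding content_cball_conv_ball by (rule content_ball_conv_unit_ball[OF assms])

lemma st_ge_if_AE_le:
  assumes "prob_space M" and [measurable]: "X \<in> borel_measurable M"
    and AE_le: "AE \<omega> in M. Y \<omega> \<le> X \<omega>"
  shows "st_ge M X Y"
  unfolding st_ge_def
proof
  fix x :: real
  interpret prob_space M by fact
  have "emeasure M {\<omega>\<in>space M. x < Y \<omega>} \<le> emeasure M {\<omega>\<in>space M. x < X \<omega>}"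
    using AE_le by (intro emeasure_mono_AE) auto
  then show "measure M {\<omega>\<in>space M. x < Y \<omega>} \<le> measure M {\<omega>\<in>space M. x < X \<omega>}"
    by (simp add: emeasure_eq_measure)
qed

context
  fixes M :: "'w measure" and lam :: real and Phi :: "'w \<Rightarrow> 'b::euclidean_space set"
  assumes ppp: "homogeneous_PPP M lam Phi"
begin

interpretation prob_space M using ppp by (simp add: homogeneous_PPP_def)

lemma ppp_locally_finite: "\<omega> \<in> space M \<Longrightarrow> \<forall>A. bounded A \<longrightarrow> finite (Phi \<omega> \<inter> A)"
  using ppp by (simp add: homogeneous_PPP_def)

lemma ppp_count_measurable [measurable]:
  "(\<lambda>\<omega>. card (points_within (Phi \<omega>) r)) \<in> measurable M (count_space UNIV)"
  using ppp unfolding homogeneous_PPP_def points_within_eq_Int_cball by auto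

lemma ppp_count_distribution:
  "measure M {\<omega>\<in>space M. card (points_within (Phi \<omega>) r) = k}
     = poisson_prob (lam * measure lborel (cball (0::'b) r)) k"
  using ppp unfolding homogeneous_PPP_def points_within_eq_Int_cball by auto

lemma ppp_count_less:
  "measure M {\<omega>\<in>space M. card (points_within (Phi \<omega>) r) < m}
     = (\<Sum>k<m. poisson_prob (lam * measure lborel (cball (0::'b) r)) k)"
proof -
  have "{\<omega>\<in>space M. card (points_within (Phi \<omega>) r) < m}
      = (\<Union>k<m. {\<omega>\<in>space M. card (points_within (Phi \<omega>) r) = k})" by auto
  also have "measure M \<dots> = (\<Sum>k<m. measure M {\<omega>\<in>space M. card (points_within (Phi \<omega>) r) = k})"
    by (rule finite_measure_finite_Union) (auto simp: disjoint_family_on_def)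
  finally show ?thesis by (simp add: ppp_count_distribution)
qed

lemma ppp_count_at_least:
  "measure M {\<omega>\<in>space M. m \<le> card (points_within (Phi \<omega>) r)}
     = 1 - (\<Sum>k<m. poisson_prob (lam * measure lborel (cball (0::'b) r)) k)"
proof -
  have "{\<omega>\<in>space M. m \<le> card (points_within (Phi \<omega>) r)}
      = space M - {\<omega>\<in>space M. card (points_within (Phi \<omega>) r) < m}" by auto
  then show ?thesis by (simp add: prob_compl ppp_count_less)
qed

lemma ppp_ordered_dist_measurable [measurable]:
  "(\<lambda>\<omega>. ordered_dist (Phi \<omega>) i) \<in> borel_measurable M"
  unfolding borel_measurable_iff_le
proof
  fix a :: real
  define enough where "enough \<omega> \<longleftrightarrow> (\<exists>n::nat. i \<le> card (points_within (Phi \<omega>) (real n)))" for \<omega>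
  have "ordered_dist (Phi \<omega>) i \<le> a \<longleftrightarrow>
      (if enough \<omega> then 0 \<le> a \<and> i \<le> card (points_within (Phi \<omega>) a) else Inf {} \<le> a)"
    if "\<omega> \<in> space M" for \<omega>
  proof (cases "enough \<omega>")
    case True
    then show ?thesis
      using ordered_dist_le_iff[OF ppp_locally_finite[OF that]]
        enough_points_iff_nat_radius[OF ppp_locally_finite[OF that]]
      unfolding enough_def by simp
  next
    case False
    then have "{r. 0 \<le> r \<and> i \<le> card (points_within (Phi \<omega>) r)} = {}"
      using enough_points_iff_nat_radius[OF ppp_locally_finite[OF that]]
      unfolding enough_def by auto
    \<comment> \<open>fewer than \<open>i\<close> points: \<open>ordered_dist\<close> is the unspecified value \<open>Inf {}\<close>\<close>
    then have "ordered_dist (Phi \<omega>) i = Inf {}" unfolding ordered_dist_def by (rule arg_cong)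
    then show ?thesis using False by simp
  qed
  then have "{\<omega>\<in>space M. ordered_dist (Phi \<omega>) i \<le> a} = {\<omega>\<in>space M.
      if enough \<omega> then 0 \<le> a \<and> i \<le> card (points_within (Phi \<omega>) a) else Inf {} \<le> a}"
    by auto
  also have "\<dots> \<in> sets M" unfolding enough_def by measurable
  finally show "{\<omega>\<in>space M. ordered_dist (Phi \<omega>) i \<le> a} \<in> sets M" .
qed

lemma ppp_CI_ratio_powr_measurable:
  "(\<lambda>\<omega>. CI_ratio (\<lambda>r. r powr e) (Phi \<omega>)) \<in> borel_measurable M"
  unfolding CI_ratio_def by measurable

lemma ppp_count_less_prob_le:
  assumes mu_pos: "0 < lam * measure lborel (cball (0::'b) r)"
  shows "measure M {\<omega>\<in>space M. card (points_within (Phi \<omega>) r) < i}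
           \<le> real i * real i / (lam * measure lborel (cball (0::'b) r))"
proof -
  let ?mu = "lam * measure lborel (cball (0::'b) r)"
  have "measure M {\<omega>\<in>space M. card (points_within (Phi \<omega>) r) < i} = (\<Sum>k<i. poisson_prob ?mu k)"
    by (rule ppp_count_less)
  also have "\<dots> \<le> (\<Sum>k<i. real i / ?mu)"
  proof (rule sum_mono)
    fix k assume "k \<in> {..<i}"
    then have "(real k + 1) / ?mu \<le> real i / ?mu" using mu_pos by (intro divide_right_mono) auto
    then show "poisson_prob ?mu k \<le> real i / ?mu" using poisson_prob_le[OF mu_pos, of k] by linarith
  qed
  finally show ?thesis by simp
qed

lemma ppp_count_at_least_prob_le:
  assumes "0 < lam * measure lborel (cball (0::'b) r)"
    and "2 * exp 1 * (lam * measure lborel (cball (0::'b) r)) \<le> real m"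
  shows "measure M {\<omega>\<in>space M. m \<le> card (points_within (Phi \<omega>) r)} \<le> (1 / 2) ^ m"
  unfolding ppp_count_at_least by (rule poisson_upper_tail_le_half_power[OF assms])

lemma ppp_AE_enough_points:
  assumes lam: "0 < lam"
  shows "AE \<omega> in M. \<forall>i. \<exists>r. 0 \<le> r \<and> i \<le> card (points_within (Phi \<omega>) r)"
proof (subst AE_all_countable, intro allI)
  fix i :: nat
  define V where "V = measure lborel (ball (0::'b) 1)"
  have V: "0 < V" unfolding V_def by (rule content_ball_pos) simp
  define A where "A = {\<omega>\<in>space M. \<forall>n::nat. card (points_within (Phi \<omega>) (real n)) < i}"
  have A_sets [measurable]: "A \<in> sets M" unfolding A_def by measurable
  define c where "c = real i * real i / (lam * V)"
  have A_small: "measure M A \<le> c / real n" if "1 \<le> n" for n :: nat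
  proof -
    have mu_eq: "lam * measure lborel (cball (0::'b) (real n)) = lam * V * real n ^ DIM('b)"
      by (simp add: V_def measure_cball_eq)
    have "real n \<le> real n ^ DIM('b)" using that by (intro self_le_power) auto
    moreover have "0 \<le> lam * V" using lam V by simp
    ultimately have mu_ge: "lam * V * real n \<le> lam * V * real n ^ DIM('b)" by (rule mult_left_mono)
    have mu_pos: "0 < lam * V * real n ^ DIM('b)" using lam V that by simp
    have "measure M A \<le> measure M {\<omega>\<in>space M. card (points_within (Phi \<omega>) (real n)) < i}"
      by (rule finite_measure_mono) (auto simp: A_def)
    also have "\<dots> \<le> real i * real i / (lam * V * real n ^ DIM('b))"
      using ppp_count_less_prob_le[of "real n" i] mu_pos unfolding mu_eq by simp
    also have "\<dots> \<le> real i * real i / (lam * V * real n)"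
      by (rule divide_left_mono[OF mu_ge]) (use mu_pos lam V that in \<open>auto intro!: mult_pos_pos\<close>)
    also have "\<dots> = c / real n" by (simp add: c_def)
    finally show ?thesis .
  qed
  have "measure M A \<le> 0"
    by (rule LIMSEQ_le_const[OF lim_const_over_n[of c]]) (use A_small in \<open>auto intro!: exI[of _ 1]\<close>)
  then have "A \<in> null_sets M"
    using measure_nonneg[of M A] by (intro null_setsI) (auto simp: emeasure_eq_measure)
  then show "AE \<omega> in M. \<exists>r. 0 \<le> r \<and> i \<le> card (points_within (Phi \<omega>) r)"
  proof (rule AE_I')
    show "{\<omega>\<in>space M. \<not> (\<exists>r. 0 \<le> r \<and> i \<le> card (points_within (Phi \<omega>) r))} \<subseteq> A"
      unfolding A_def by (auto simp: not_le) (meson not_less of_nat_0_le_iff)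
  qed
qed

lemma ppp_AE_dyadic_count_bound:
  assumes lam: "0 < lam"
  obtains C where "0 < C"
    "AE \<omega> in M. \<exists>K. \<forall>k\<ge>K. real (card (points_within (Phi \<omega>) (2 ^ k))) \<le> C * (2 ^ k) ^ DIM('b)"
proof
  define V where "V = measure lborel (ball (0::'b) 1)"
  have V: "0 < V" unfolding V_def by (rule content_ball_pos) simp
  define C where "C = 2 * exp 1 * lam * V + 1"
  show "0 < C" using lam V by (simp add: C_def add_pos_nonneg)
  \<comment> \<open>\<open>m k\<close> exceeds both \<open>k\<close> and \<open>2e\<close> times the mean count in \<open>cball 0 (2\<^sup>k)\<close>\<close>
  define m where "m k = nat \<lceil>C * (2 ^ k) ^ DIM('b)\<rceil>" for k :: nat
  define B where "B k = {\<omega>\<in>space M. m k \<le> card (points_within (Phi \<omega>) (2 ^ k))}" for k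
  have [measurable]: "B k \<in> sets M" for k unfolding B_def by measurable
  have B_small: "measure M (B k) \<le> (1 / 2) ^ k" for k
  proof -
    have mu_eq: "lam * measure lborel (cball (0::'b) (2 ^ k)) = lam * V * (2 ^ k) ^ DIM('b)"
      by (simp add: V_def measure_cball_eq)
    have mu_pos: "0 < lam * measure lborel (cball (0::'b) (2 ^ k))"
      using lam V by (simp add: mu_eq)
    have "2 * exp 1 * (lam * measure lborel (cball (0::'b) (2 ^ k))) \<le> C * (2 ^ k) ^ DIM('b)"
      unfolding mu_eq by (simp add: C_def algebra_simps)
    also have "\<dots> \<le> real (m k)" unfolding m_def by (rule real_nat_ceiling_ge)
    finally have "measure M (B k) \<le> (1 / 2) ^ m k"
      unfolding B_def by (rule ppp_count_at_least_prob_le[OF mu_pos])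
    also have "real k \<le> C * (2 ^ k) ^ DIM('b)"
    proof -
      have "real k \<le> 2 ^ k" using less_exp[of k] by (simp add: less_imp_le)
      also have "\<dots> \<le> (2 ^ k) ^ DIM('b)" by (intro self_le_power) auto
      also have "\<dots> \<le> C * (2 ^ k) ^ DIM('b)" using lam V by (simp add: C_def algebra_simps)
      finally show ?thesis .
    qed
    then have "k \<le> m k"
      using real_nat_ceiling_ge[of "C * (2 ^ k) ^ DIM('b)"] unfolding m_def
      by (metis of_nat_le_iff order_trans)
    then have "(1 / 2) ^ m k \<le> ((1 / 2) ^ k :: real)" by (intro power_decreasing) auto
    finally show ?thesis .
  qed
  then have "summable (\<lambda>k. measure M (B k))"
    by (intro summable_comparison_test'[OF summable_geometric[of "1 / 2 :: real"]]) auto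
  then have "AE \<omega> in M. eventually (\<lambda>k. \<omega> \<in> space M - B k) sequentially"
    by (intro borel_cantelli_AE1) (auto simp: emeasure_eq_measure)
  then show "AE \<omega> in M. \<exists>K. \<forall>k\<ge>K. real (card (points_within (Phi \<omega>) (2 ^ k))) \<le> C * (2 ^ k) ^ DIM('b)"
  proof (rule eventually_mono)
    fix \<omega> assume "eventually (\<lambda>k. \<omega> \<in> space M - B k) sequentially"
    then obtain K where "\<And>k. K \<le> k \<Longrightarrow> \<not> m k \<le> card (points_within (Phi \<omega>) (2 ^ k))"
      by (auto simp: eventually_sequentially B_def)
    then show "\<exists>K. \<forall>k\<ge>K. real (card (points_within (Phi \<omega>) (2 ^ k))) \<le> C * (2 ^ k) ^ DIM('b)"
      unfolding m_def nat_ceiling_le_eq by (meson less_imp_le not_le)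
  qed
qed

lemma ppp_AE_count_growth:
  assumes lam: "0 < lam"
  shows "AE \<omega> in M. \<exists>C r0. 0 < C \<and> 0 \<le> r0 \<and>
           (\<forall>r\<ge>r0. real (card (points_within (Phi \<omega>) r)) \<le> C * r ^ DIM('b))"
proof -
  obtain C where C: "0 < C" and dyadic:
    "AE \<omega> in M. \<exists>K. \<forall>k\<ge>K. real (card (points_within (Phi \<omega>) (2 ^ k))) \<le> C * (2 ^ k) ^ DIM('b)"
    using ppp_AE_dyadic_count_bound[OF lam] by blast
  from dyadic AE_space show ?thesis
  proof eventually_elim
    case (elim \<omega>)
    then obtain K where K: "\<And>k. K \<le> k \<Longrightarrow>
        real (card (points_within (Phi \<omega>) (2 ^ k))) \<le> C * (2 ^ k) ^ DIM('b)" by blast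
    have "real (card (points_within (Phi \<omega>) r)) \<le> (C * 2 ^ DIM('b)) * r ^ DIM('b)"
      if "2 ^ K \<le> r" for r
      using count_bound_from_dyadic[OF ppp_locally_finite[OF elim(2)] _ K that] C
      by (simp add: power_mult_distrib mult_ac)
    then show ?case using C by (intro exI[of _ "C * 2 ^ DIM('b)"] exI[of _ "2 ^ K"]) auto
  qed
qed

end

theorem corollary5:
  fixes M :: "'w measure" and Phi :: "'w \<Rightarrow> 'b::euclidean_space set"
    and lam0 eps1 eps2 :: real
  assumes "DIM('b) \<in> {1, 2, 3}"
    and "lam0 > 0"
    and "homogeneous_PPP M lam0 Phi"
    and "eps1 > eps2" and "eps2 > real DIM('b)"
  shows "st_ge M (\<lambda>\<omega>. CI_ratio (\<lambda>r. r powr eps1) (Phi \<omega>))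
                 (\<lambda>\<omega>. CI_ratio (\<lambda>r. r powr eps2) (Phi \<omega>))"
proof -
  note ppp = \<open>homogeneous_PPP M lam0 Phi\<close>
  have AE_le: "AE \<omega> in M. CI_ratio (\<lambda>r. r powr eps2) (Phi \<omega>) \<le> CI_ratio (\<lambda>r. r powr eps1) (Phi \<omega>)"
    using ppp_AE_enough_points[OF ppp \<open>lam0 > 0\<close>] ppp_AE_count_growth[OF ppp \<open>lam0 > 0\<close>] AE_space
  proof eventually_elim
    case (elim \<omega>)
    then obtain C r0 where C: "0 < C" "0 \<le> r0" and
      growth: "\<And>r. r0 \<le> r \<Longrightarrow> real (card (points_within (Phi \<omega>) r)) \<le> C * r ^ DIM('b)"
      by blast
    show ?case
      using CI_ratio_powr_mono[OF ppp_locally_finite[OF ppp elim(3)] elim(1) growth C(2,1)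
          assms(5) less_imp_le[OF assms(4)]] .
  qed
  have "prob_space M" using ppp by (simp add: homogeneous_PPP_def)
  from this AE_le show ?thesis
    by (rule st_ge_if_AE_le[OF _ ppp_CI_ratio_powr_measurable[OF ppp]])
qed

end
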